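(* Let $d>0$, $N\ge1$, let $\mathcal{S}$ be the 4-PAM constellation labeled by any Gray labeling, let $\boldsymbol{x},\hat{\boldsymbol{x}}\in\mathcal{S}^N$ be distinct, and let $\boldsymbol{h}=[h[1],\dots,h[N]]\in\mathbb{R}^N$ be any channel realization with $h[k]\neq0$ for some $k$ with $x[k]\neq\hat{x}[k]$. Then the asymptotic loss satisfies $\mathsf{L}(\boldsymbol{h},\boldsymbol{x},\hat{\boldsymbol{x}})\le 1.25$ dB.
   Context: $\mathcal{S}=\{s_1,s_2,s_3,s_4\}$ with $s_1=-3d$, $s_2=-d$, $s_3=d$, $s_4=3d$; the Gray labelings (bijections $\{0,1\}^2\to\mathcal{S}$ given by $\boldsymbol{q}=[q_1,\dots,q_4]$, $q_i$ the integer value of the label of $s_i$, most significant bit first) are $[0,1,3,2]$, $[0,2,3,1]$, $[1,0,2,3]$, $[2,0,1,3]$. The flat fading channel is $Y[k]=h[k]x[k]+Z[k]$ with known real coefficients $h[k]$. For each $k$ with $x[k]\neq\hat{x}[k]$: $\mu^{\mathcal{X}}_k=\sigma^{2,\mathcal{X}}_k=(x[k]-\hat{x}[k])^2/(4d^2)$; $\mu^{\mathcal{B}}_k=\sigma^{2,\mathcal{B}}_k=(x[k]-\hat{x}[k])^2/(4d^2)$ except that if $\{x[k],\hat{x}[k]\}=\{s_1,s_4\}$ then $\mu^{\mathcal{B}}_k=3$, $\sigma^{2,\mathcal{B}}_k=1$. Summing over $k$ with $x[k]\neq\hat{x}[k]$, the normalized distances are $a^{\mathcal{X}}(\boldsymbol{h},\boldsymbol{x},\hat{\boldsymbol{x}})=\sum_k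 h[k]^2\mu^{\mathcal{X}}_k/\sqrt{\sum_k h[k]^2\sigma^{2,\mathcal{X}}_k}$ (symbol-wise ML decoder) and $a^{\mathcal{B}}(\boldsymbol{h},\boldsymbol{x},\hat{\boldsymbol{x}})=\sum_k h[k]^2\mu^{\mathcal{B}}_k/\sqrt{\sum_k h[k]^2\sigma^{2,\mathcal{B}}_k}$ (bit-wise max-log decoder under the zero-crossing approximation), and the asymptotic loss is $\mathsf{L}(\boldsymbol{h},\boldsymbol{x},\hat{\boldsymbol{x}})=20\log_{10}\big(a^{\mathcal{X}}(\boldsymbol{h},\boldsymbol{x},\hat{\boldsymbol{x}})/a^{\mathcal{B}}(\boldsymbol{h},\boldsymbol{x},\hat{\boldsymbol{x}})\big)$ dB. *)

theory Defs
  imports Complex_Main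
begin

definition pam_sym :: "real \<Rightarrow> nat \<Rightarrow> real" where
  "pam_sym d i = (if i = 1 then -3*d else if i = 2 then -d else if i = 3 then d else 3*d)"

definition pam4 :: "real \<Rightarrow> real set" where
  "pam4 d = {pam_sym d 1, pam_sym d 2, pam_sym d 3, pam_sym d 4}"

text \<open>Gray labelings q = [q_1,..,q_4], q_i the integer value of the label of s_i.\<close>
definition gray_labelings :: "nat list set" where
  "gray_labelings = {[0,1,3,2], [0,2,3,1], [1,0,2,3], [2,0,1,3]}"

definition mu_X :: "real \<Rightarrow> real \<Rightarrow> real \<Rightarrow> real" where
  "mu_X d a b = (a - b)^2 / (4 * d^2)"

definition sigma2_X :: "real \<Rightarrow> real \<Rightarrow> real \<Rightarrow> real" where
  "sigma2_X d a b = (a - b)^2 / (4 * d^2)"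

definition mu_B :: "real \<Rightarrow> real \<Rightarrow> real \<Rightarrow> real" where
  "mu_B d a b = (if {a, b} = {pam_sym d 1, pam_sym d 4} then 3 else (a - b)^2 / (4 * d^2))"

definition sigma2_B :: "real \<Rightarrow> real \<Rightarrow> real \<Rightarrow> real" where
  "sigma2_B d a b = (if {a, b} = {pam_sym d 1, pam_sym d 4} then 1 else (a - b)^2 / (4 * d^2))"

definition diff_pos :: "nat \<Rightarrow> (nat \<Rightarrow> real) \<Rightarrow> (nat \<Rightarrow> real) \<Rightarrow> nat set" where
  "diff_pos N x xh = {k \<in> {1..N}. x k \<noteq> xh k}"

definition a_X :: "real \<Rightarrow> nat \<Rightarrow> (nat \<Rightarrow> real) \<Rightarrow> (nat \<Rightarrow> real) \<Rightarrow> (nat \<Rightarrow> real) \<Rightarrow> real" where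
  "a_X d N h x xh =
     (\<Sum>k\<in>diff_pos N x xh. (h k)^2 * mu_X d (x k) (xh k)) /
     sqrt (\<Sum>k\<in>diff_pos N x xh. (h k)^2 * sigma2_X d (x k) (xh k))"

definition a_B :: "real \<Rightarrow> nat \<Rightarrow> (nat \<Rightarrow> real) \<Rightarrow> (nat \<Rightarrow> real) \<Rightarrow> (nat \<Rightarrow> real) \<Rightarrow> real" where
  "a_B d N h x xh =
     (\<Sum>k\<in>diff_pos N x xh. (h k)^2 * mu_B d (x k) (xh k)) /
     sqrt (\<Sum>k\<in>diff_pos N x xh. (h k)^2 * sigma2_B d (x k) (xh k))"

definition asym_loss :: "real \<Rightarrow> nat \<Rightarrow> (nat \<Rightarrow> real) \<Rightarrow> (nat \<Rightarrow> real) \<Rightarrow> (nat \<Rightarrow> real) \<Rightarrow> real" where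
  "asym_loss d N h x xh = 20 * log 10 (a_X d N h x xh / a_B d N h x xh)"

end

theory Submission
  imports Defs
begin

text \<open>Split the distance sums into the contribution A of positions whose symbol pair is not the
outer pair {s_1, s_4} and the total channel energy B on the outer-pair positions. The symbol-wise
moments are then A + 9B on both sides, while the bit-wise ones are A + 3B and A + B, so the squared
ratio of normalized distances is (A + 9B)(A + B)/(A + 3B)^2 = 4/3 - (A - 3B)^2/(3(A + 3B)^2),
and 10 log10 (4/3) < 1.25.\<close>

abbreviation outer_pair :: "real \<Rightarrow> real \<Rightarrow> real \<Rightarrow> bool" where
  "outer_pair d a b \<equiv> {a, b} = {pam_sym d 1, pam_sym d 4}"

lemma mu_X_outer_pair:
  assumes "d \<noteq> 0" and "outer_pair d a b"
  shows "mu_X d a b = 9"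
proof -
  have "(a - b)^2 = (6 * d)^2"
    using assms(2) unfolding pam_sym_def by (auto simp: doubleton_eq_iff power2_eq_square algebra_simps)
  then show ?thesis using assms(1) unfolding mu_X_def by (simp add: power_mult_distrib)
qed

lemma energy_ratio_le_4_3:
  fixes A B :: real
  assumes "A + 3 * B \<noteq> 0"
  shows "(A + 9 * B) * (A + B) / (A + 3 * B)^2 \<le> 4 / 3"
proof -
  have "3 * ((A + 9 * B) * (A + B)) = 4 * (A + 3 * B)^2 - (A - 3 * B)^2"
    by (simp add: power2_eq_square algebra_simps)
  then have "3 * ((A + 9 * B) * (A + B)) \<le> 4 * (A + 3 * B)^2"
    by simp
  then show ?thesis using assms by (simp add: divide_simps)
qed

lemma normalized_distance_ratio_sq:
  fixes A B :: real
  assumes "A \<ge> 0" and "B \<ge> 0" and "A + B > 0"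
  shows "((A + 9 * B) / sqrt (A + 9 * B) / ((A + 3 * B) / sqrt (A + B)))^2
           = (A + 9 * B) * (A + B) / (A + 3 * B)^2"
proof -
  have "(A + 9 * B) / sqrt (A + 9 * B) = sqrt (A + 9 * B)"
    using assms by (simp add: real_div_sqrt)
  then show ?thesis using assms by (simp add: power_divide power_mult_distrib)
qed

lemma dB_le_of_sq_le_4_3:
  fixes r :: real
  assumes "r > 0" and "r^2 \<le> 4 / 3"
  shows "20 * log 10 r \<le> 1.25"
proof -
  have "r^16 = (r^2)^8" by (simp flip: power_mult)
  also have "\<dots> \<le> (4 / 3)^8" using assms by (intro power_mono) auto
  also have "\<dots> \<le> 10" by (simp add: power_divide)
  finally have "log 10 (r^16) \<le> log 10 10" using assms by (subst log_le_cancel_iff) auto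
  moreover have "log 10 (r^16) = 16 * log 10 r" using assms by (simp add: log_nat_power)
  ultimately show ?thesis by simp
qed

lemma distance_sums_decompose:
  fixes h x xh :: "nat \<Rightarrow> real"
  assumes "d \<noteq> 0" and "finite D" and "k0 \<in> D" and "x k0 \<noteq> xh k0" and "h k0 \<noteq> 0"
  obtains A B :: real where "A \<ge> 0" and "B \<ge> 0" and "A + B > 0"
    and "(\<Sum>k\<in>D. (h k)^2 * mu_X d (x k) (xh k)) = A + 9 * B"
    and "(\<Sum>k\<in>D. (h k)^2 * sigma2_X d (x k) (xh k)) = A + 9 * B"
    and "(\<Sum>k\<in>D. (h k)^2 * mu_B d (x k) (xh k)) = A + 3 * B"
    and "(\<Sum>k\<in>D. (h k)^2 * sigma2_B d (x k) (xh k)) = A + B"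
proof -
  define a where "a k = (if outer_pair d (x k) (xh k) then 0 else (h k)^2 * mu_X d (x k) (xh k))" for k
  define b where "b k = (if outer_pair d (x k) (xh k) then (h k)^2 else 0)" for k
  have a_nonneg: "a k \<ge> 0" for k unfolding a_def mu_X_def by auto
  have b_nonneg: "b k \<ge> 0" for k unfolding b_def by auto
  have "a k0 + b k0 > 0"
    using assms(1,4,5) unfolding a_def b_def mu_X_def by auto
  then have "(\<Sum>k\<in>D. a k + b k) > 0"
    using assms(2,3) by (intro sum_pos2[of D k0]) (auto intro: add_nonneg_nonneg a_nonneg b_nonneg)
  moreover have
    "(h k)^2 * mu_X d (x k) (xh k) = a k + 9 * b k"
    "(h k)^2 * sigma2_X d (x k) (xh k) = a k + 9 * b k"
    "(h k)^2 * mu_B d (x k) (xh k) = a k + 3 * b k"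
    "(h k)^2 * sigma2_B d (x k) (xh k) = a k + b k" for k
    using mu_X_outer_pair[OF assms(1), of "x k" "xh k"]
    unfolding a_def b_def mu_B_def sigma2_B_def sigma2_X_def mu_X_def[symmetric] by auto
  ultimately show thesis
    by (intro that[of "\<Sum>k\<in>D. a k" "\<Sum>k\<in>D. b k"])
       (simp_all add: sum_nonneg a_nonneg b_nonneg sum.distrib sum_distrib_left)
qed

theorem theorem5:
  fixes d :: real and N :: nat and q :: "nat list"
    and h x xh :: "nat \<Rightarrow> real"
  assumes "d > 0" and "N \<ge> 1"
    and "q \<in> gray_labelings"
    and "\<forall>k\<in>{1..N}. x k \<in> pam4 d" and "\<forall>k\<in>{1..N}. xh k \<in> pam4 d"
    and "\<exists>k\<in>{1..N}. x k \<noteq> xh k"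
    and "\<exists>k\<in>{1..N}. x k \<noteq> xh k \<and> h k \<noteq> 0"
  shows "asym_loss d N h x xh \<le> 1.25"
proof -
  obtain k0 where k0: "k0 \<in> diff_pos N x xh" "x k0 \<noteq> xh k0" "h k0 \<noteq> 0"
    using assms(7) unfolding diff_pos_def by auto
  have "d \<noteq> 0" "finite (diff_pos N x xh)" using assms(1) unfolding diff_pos_def by simp_all
  then obtain A B where AB: "A \<ge> 0" "B \<ge> 0" "A + B > 0"
    and sums: "(\<Sum>k\<in>diff_pos N x xh. (h k)^2 * mu_X d (x k) (xh k)) = A + 9 * B"
      "(\<Sum>k\<in>diff_pos N x xh. (h k)^2 * sigma2_X d (x k) (xh k)) = A + 9 * B"
      "(\<Sum>k\<in>diff_pos N x xh. (h k)^2 * mu_B d (x k) (xh k)) = A + 3 * B"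
      "(\<Sum>k\<in>diff_pos N x xh. (h k)^2 * sigma2_B d (x k) (xh k)) = A + B"
    using k0 by (rule distance_sums_decompose)
  define r where "r = a_X d N h x xh / a_B d N h x xh"
  have r: "r = (A + 9 * B) / sqrt (A + 9 * B) / ((A + 3 * B) / sqrt (A + B))"
    unfolding r_def a_X_def a_B_def sums ..
  have "r > 0" unfolding r using AB by simp
  moreover have "r^2 \<le> 4 / 3"
    unfolding r normalized_distance_ratio_sq[OF AB] using AB by (intro energy_ratio_le_4_3) simp
  ultimately show ?thesis unfolding asym_loss_def r_def[symmetric] by (rule dB_le_of_sq_le_4_3)
qed

end
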